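(* Let $p\ge1$ and $m\ge1$ be integers. Let $S=(S_1,S_2,\dots,S_N)$ be a finite sequence of words of length $m$ over $\{0,1\}$, each containing exactly one letter $1$; let $\sigma(b)$ denote the position of the $1$ in $S_b$. Suppose that for every position $s$ and every indices $a_1<a_2<\dots<a_p$ with $\sigma(a_1)=\dots=\sigma(a_p)=s$ there exists an index $b$ with $a_1<b<a_p$ and $\sigma(b)<s$. Then $N\le p^m-1$. *)

theory Defs
  imports Main
begin

definition one_hot_word :: "nat \<Rightarrow> nat list \<Rightarrow> bool" where
  "one_hot_word m w \<longleftrightarrow> length w = m \<and> set w \<subseteq> {0, 1} \<and> count_list w 1 = 1"

definition pos1 :: "nat list \<Rightarrow> nat" where
  "pos1 w = (THE i. i < length w \<and> w ! i = 1)"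

end

theory Submission
  imports Defs
begin

text \<open>
  Work with the sequence of positions \<sigma>(1), ..., \<sigma>(N), whose values lie in an interval of
  m integers, and induct on m. The minimal value occurs fewer than p times, since between p of
  its occurrences there would have to be a smaller value. Its occurrences cut the sequence into
  at most p blocks, each of which inherits the hypothesis and takes only m - 1 values, hence has
  length below p^(m-1). So the whole sequence has length below p * p^(m-1).
\<close>

lemma subset_atLeastLessThan_Suc:
  assumes "A \<subseteq> {lo..<hi}" and "lo \<notin> A"
  shows "A \<subseteq> {Suc lo..<hi}"
  using assms by (auto simp: subset_iff Suc_le_eq le_less)

definition separated :: "nat \<Rightarrow> nat list \<Rightarrow> bool" where
  "separated p xs \<longleftrightarrow> (\<forall>s (a :: nat \<Rightarrow> nat).
     (strict_mono_on {0..<p} a \<and> (\<forall>i<p. a i < length xs \<and> xs ! a i = s))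
     \<longrightarrow> (\<exists>b. a 0 < b \<and> b < a (p - 1) \<and> xs ! b < s))"

lemma separated_infix:
  assumes "separated p (xs @ ys @ zs)" and "p \<ge> 1"
  shows "separated p ys"
  unfolding separated_def
proof (intro allI impI)
  fix s and a :: "nat \<Rightarrow> nat"
  assume a: "strict_mono_on {0..<p} a \<and> (\<forall>i<p. a i < length ys \<and> ys ! a i = s)"
  define a' where "a' i = a i + length xs" for i
  have "strict_mono_on {0..<p} a' \<and>
      (\<forall>i<p. a' i < length (xs @ ys @ zs) \<and> (xs @ ys @ zs) ! a' i = s)"
    using a unfolding a'_def strict_mono_on_def by (auto simp: nth_append)
  then obtain b where b: "a' 0 < b" "b < a' (p - 1)" "(xs @ ys @ zs) ! b < s"
    using assms(1) unfolding separated_def by blast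
  have "a (p - 1) < length ys"
    using a assms(2) by simp
  with b have "b - length xs < length ys" and "length xs \<le> b"
    unfolding a'_def by linarith+
  with b show "\<exists>b. a 0 < b \<and> b < a (p - 1) \<and> ys ! b < s"
    unfolding a'_def by (intro exI[of _ "b - length xs"]) (auto simp: nth_append)
qed

lemma separated_count_list_min_less:
  assumes "separated p xs" and "p \<ge> 1" and "\<forall>x\<in>set xs. lo \<le> x"
  shows "count_list xs lo < p"
proof (rule ccontr)
  assume "\<not> count_list xs lo < p"
  define L where "L = sorted_list_of_set {i. i < length xs \<and> xs ! i = lo}"
  have set_L: "set L = {i. i < length xs \<and> xs ! i = lo}"
    unfolding L_def by simp
  have "length L = count_list xs lo"
    unfolding L_def count_list_eq_length_filter length_filter_conv_card
    by (simp add: eq_commute)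
  with \<open>\<not> count_list xs lo < p\<close> have p_le: "p \<le> length L"
    by simp
  have "sorted_wrt (<) L"
    unfolding L_def by simp
  with p_le have "strict_mono_on {0..<p} (nth L)"
    unfolding strict_mono_on_def by (auto intro: sorted_wrt_nth_less)
  moreover have occ: "\<forall>i<p. L ! i < length xs \<and> xs ! (L ! i) = lo"
  proof (intro allI impI)
    fix i
    assume "i < p"
    with p_le have "L ! i \<in> set L"
      by simp
    with set_L show "L ! i < length xs \<and> xs ! (L ! i) = lo"
      by simp
  qed
  ultimately obtain b where "b < L ! (p - 1)" and "xs ! b < lo"
    using assms(1) unfolding separated_def by blast
  moreover have "L ! (p - 1) < length xs"
    using occ assms(2) by simp
  ultimately show False
    using assms(3) by (meson nth_mem order.strict_trans not_le)
qed

lemma separated_length_less_count_list_mult: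
  assumes "separated p xs" and "p \<ge> 1" and "set xs \<subseteq> {lo..<hi}"
    and block_bound: "\<And>ys. separated p ys \<Longrightarrow> set ys \<subseteq> {Suc lo..<hi} \<Longrightarrow> length ys < K"
  shows "length xs < (count_list xs lo + 1) * K"
  using assms(1,3)
proof (induction "count_list xs lo" arbitrary: xs)
  case 0
  then have "lo \<notin> set xs"
    by (simp add: count_list_0_iff)
  with 0 show ?case
    using block_bound subset_atLeastLessThan_Suc by simp
next
  case (Suc c)
  then have "lo \<in> set xs"
    by (metis count_list_0_iff nat.distinct(1))
  then obtain ys zs where xs: "xs = ys @ lo # zs" and "lo \<notin> set zs"
    using split_list_last by metis
  have count_ys: "count_list ys lo = c"
    using Suc.hyps(2) xs \<open>lo \<notin> set zs\<close> by (simp add: count_notin)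
  moreover have "separated p ys"
    using separated_infix[of p "[]" ys "lo # zs"] Suc.prems(1) xs assms(2) by simp
  moreover have "set ys \<subseteq> {lo..<hi}"
    using Suc.prems(2) xs by simp
  ultimately have "length ys < (c + 1) * K"
    using Suc.hyps(1) by metis
  moreover have "length zs < K"
  proof (rule block_bound)
    show "separated p zs"
      using separated_infix[of p "ys @ [lo]" zs "[]"] Suc.prems(1) xs assms(2) by simp
    show "set zs \<subseteq> {Suc lo..<hi}"
      using Suc.prems(2) xs \<open>lo \<notin> set zs\<close> subset_atLeastLessThan_Suc by simp
  qed
  ultimately show ?case
    using xs count_ys \<open>lo \<notin> set zs\<close> by (simp add: count_notin)
qed

lemma separated_length_less_pow:
  assumes "separated p xs" and "p \<ge> 1" and "set xs \<subseteq> {lo..<lo + m}"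
  shows "length xs < p ^ m"
  using assms(1,3)
proof (induction m arbitrary: lo xs)
  case 0
  then show ?case
    by simp
next
  case (Suc m)
  have "length xs < (count_list xs lo + 1) * p ^ m"
    using Suc.prems assms(2) Suc.IH[of _ "Suc lo"]
    by (intro separated_length_less_count_list_mult[where hi = "lo + Suc m"]) simp_all
  also have "\<dots> \<le> p * p ^ m"
  proof (intro mult_right_mono)
    have "\<forall>x\<in>set xs. lo \<le> x"
      using Suc.prems(2) by auto
    then show "count_list xs lo + 1 \<le> p"
      using separated_count_list_min_less Suc.prems(1) assms(2) by (metis Suc_eq_plus1 Suc_leI)
  qed simp
  finally show ?case
    by simp
qed

lemma pos1_less:
  assumes "one_hot_word m w"
  shows "pos1 w < m"
proof -
  have "card {i. i < length w \<and> w ! i = 1} = 1"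
    using assms unfolding one_hot_word_def count_list_eq_length_filter length_filter_conv_card
    by (simp add: eq_commute)
  then obtain i where i: "{i. i < length w \<and> w ! i = 1} = {i}"
    by (rule card_1_singletonE)
  then have "pos1 w = i"
    unfolding pos1_def by (intro the_equality) blast+
  moreover have "i < length w"
    using i by blast
  ultimately show ?thesis
    using assms unfolding one_hot_word_def by simp
qed

lemma separated_mapI:
  assumes "p \<ge> 1"
    and "\<forall>s (a :: nat \<Rightarrow> nat).
           (strict_mono_on {0..<p} a \<and> (\<forall>i<p. a i < length S \<and> f (S ! a i) = s))
           \<longrightarrow> (\<exists>b. a 0 < b \<and> b < a (p - 1) \<and> f (S ! b) < s)"
  shows "separated p (map f S)"
  unfolding separated_def
proof (intro allI impI)
  fix s and a :: "nat \<Rightarrow> nat"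
  assume a: "strict_mono_on {0..<p} a \<and> (\<forall>i<p. a i < length (map f S) \<and> map f S ! a i = s)"
  then have "\<forall>i<p. a i < length S \<and> f (S ! a i) = s"
    by (metis length_map nth_map)
  then obtain b where "a 0 < b" "b < a (p - 1)" "f (S ! b) < s"
    using assms(2) a by meson
  moreover have "a (p - 1) < length S"
    using a assms(1) by simp
  ultimately show "\<exists>b. a 0 < b \<and> b < a (p - 1) \<and> map f S ! b < s"
    by auto
qed

theorem lemmac:
  fixes p m :: nat and S :: "nat list list"
  assumes "p \<ge> 1" and "m \<ge> 1"
    and "\<forall>w \<in> set S. one_hot_word m w"
    and "\<forall>s (a :: nat \<Rightarrow> nat).
           (strict_mono_on {0..<p} a \<and> (\<forall>i<p. a i < length S \<and> pos1 (S ! a i) = s))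
           \<longrightarrow> (\<exists>b. a 0 < b \<and> b < a (p - 1) \<and> pos1 (S ! b) < s)"
  shows "length S \<le> p ^ m - 1"
proof -
  have "separated p (map pos1 S)"
    using assms(1,4) by (rule separated_mapI)
  moreover have "set (map pos1 S) \<subseteq> {0..<0 + m}"
    using assms(3) pos1_less by auto
  ultimately have "length (map pos1 S) < p ^ m"
    using separated_length_less_pow assms(1) by blast
  then show ?thesis
    by simp
qed

end
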